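(* Let $K\in\mathcal M(L^0(\mathcal G)\times\mathcal P^q)$. For $(Y^*,Q^* )\in L^0(\mathcal G)\times\mathcal P^q$ let $\mathcal A(Y^*,Q^* )=\{\xi\in L^p_{\mathcal G}(\mathcal F):E[-\xi\tfrac{dQ^*}{d\mathbb P}|\mathcal G]\ge Y^*\}$. Then for every $(Y^*,Q^* )\in L^0(\mathcal G)\times\mathcal P^q$ $$K(Y^*,Q^* )=\operatorname*{ess\,sup}_{Q\in\mathcal P^q}\ \operatorname*{ess\,inf}_{X\in\mathcal A(Y^*,Q^* )}K\Big(E\Big[-X\tfrac{dQ}{d\mathbb P}\Big|\mathcal G\Big],Q\Big).$$
   Context: Let $(\Omega,\mathcal F,\mathbb P)$ be a probability space, $\mathcal G\subseteq\mathcal F$ a sub-$\sigma$-algebra; (in)equalities a.s.; "on $A$" means a.s. on $A$. $L^0(\mathcal G)$: a.s. finite $\mathcal G$-measurable r.v.; $\bar L^0(\mathcal G)$: values in $\mathbb R\cup\{+\infty\}$; $L^0_{++}(\mathcal G)=\{Y>0\}$. Fix $p\in[1,\infty]$, $1/p+1/q=1$. $\|X|\mathcal G\|_p=E[|X|^p|\mathcal G]^{1/p}$ ($p<\infty$, with $E[W|\mathcal G]=\lim_nE[W\wedge n|\mathcal G]$ for $W\ge0$), $\|X|\mathcal G\|_\infty=\operatorname{ess\,inf}\{Y\ \mathcal G\text{-meas.},Y\ge|X|\}$; $L^p_{\mathcal G}(\mathcal F)=\{X:\|X|\mathcal G\|_p<\infty\text{ a.s.}\}=L^0(\mathcal G)\cdot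 L^p(\mathcal F)$ with $E[YW|\mathcal G]:=YE[W|\mathcal G]$; likewise $L^q_{\mathcal G}(\mathcal F)$. $\mathcal P^q=\{Z\in L^q_{\mathcal G}(\mathcal F):Z\ge0,E[Z|\mathcal G]=1\}$, identified with probabilities $Q$, $dQ/d\mathbb P=Z$. The class $\mathcal M(L^0(\mathcal G)\times\mathcal P^q)$ consists of maps $K:L^0(\mathcal G)\times\mathcal P^q\to\bar L^0(\mathcal G)$ such that: (i) $K$ is nondecreasing in the first argument; (ii) $K(Y\mathbf 1_A,Q)\mathbf 1_A=K(Y,Q)\mathbf 1_A$ for all $A\in\mathcal G$, $Y$, $Q$; (iii) $\operatorname{ess\,inf}_{Y\in L^0(\mathcal G)}K(Y,Q)=\operatorname{ess\,inf}_{Y\in L^0(\mathcal G)}K(Y,Q')$ for all $Q,Q'\in\mathcal P^q$; (iv) for every $(Y^*,Q^* )$, $A\in\mathcal G$, $\alpha\in L^0(\mathcal G)$ with $K(Y^*,Q^* )<\alpha$ on $A$, there exists $(S^*,X^* )\in L^0_{++}(\mathcal G)\times L^p_{\mathcal G}(\mathcal F)$ with $Y^*S^*+E[X^*\tfrac{dQ^*}{d\mathbb P}|\mathcal G]<YS^*+E[X^*\tfrac{dQ}{d\mathbb P}|\mathcal G]$ on $A$ for every $(Y,Q)$ with $K(Y,Q)\ge\alpha$ on $A$; (v) for every $X\in L^p_{\mathcal G}(\mathcal F)$ the set $\{K(E[X\tfrac{dQ}{d\mathbb P}|\mathcal G],Q):Q\in\mathcal P^q\}$ is upward directed; (vi)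 $K(Y,Q_1)\mathbf 1_A=K(Y,Q_2)\mathbf 1_A$ whenever $A\in\mathcal G$ and $\tfrac{dQ_1}{d\mathbb P}\mathbf 1_A=\tfrac{dQ_2}{d\mathbb P}\mathbf 1_A$. *)

theory Defs
  imports "HOL-Probability.Probability"
begin

text \<open>Setting: M is the probability space (Omega, F, P) (sets M = F), G is a
measure whose sets form the sub-sigma-algebra (subalgebra M G).  Random
variables are represented by functions; all (in)equalities are almost sure
(AE w.r.t. M).  The generalized conditional expectation E[X|G] is
real_cond_exp M G X = E[X^+|G] - E[X^-|G] built from the nonnegative
conditional expectation nn_cond_exp (which for W >= 0 equals lim E[W /\ n|G]).\<close>

definition is_ess_inf ::
  "'a measure \<Rightarrow> 'a measure \<Rightarrow> 'i set \<Rightarrow> ('i \<Rightarrow> 'a \<Rightarrow> ereal) \<Rightarrow> ('a \<Rightarrow> ereal) \<Rightarrow> bool" where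
  "is_ess_inf M G I f g \<longleftrightarrow>
     g \<in> borel_measurable G \<and>
     (\<forall>i\<in>I. AE \<omega> in M. g \<omega> \<le> f i \<omega>) \<and>
     (\<forall>h\<in>borel_measurable G. (\<forall>i\<in>I. AE \<omega> in M. h \<omega> \<le> f i \<omega>) \<longrightarrow> (AE \<omega> in M. h \<omega> \<le> g \<omega>))"

definition is_ess_sup ::
  "'a measure \<Rightarrow> 'a measure \<Rightarrow> 'i set \<Rightarrow> ('i \<Rightarrow> 'a \<Rightarrow> ereal) \<Rightarrow> ('a \<Rightarrow> ereal) \<Rightarrow> bool" where
  "is_ess_sup M G I f g \<longleftrightarrow>
     g \<in> borel_measurable G \<and>
     (\<forall>i\<in>I. AE \<omega> in M. f i \<omega> \<le> g \<omega>) \<and>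
     (\<forall>h\<in>borel_measurable G. (\<forall>i\<in>I. AE \<omega> in M. f i \<omega> \<le> h \<omega>) \<longrightarrow> (AE \<omega> in M. g \<omega> \<le> h \<omega>))"

definition ess_inf ::
  "'a measure \<Rightarrow> 'a measure \<Rightarrow> 'i set \<Rightarrow> ('i \<Rightarrow> 'a \<Rightarrow> ereal) \<Rightarrow> 'a \<Rightarrow> ereal" where
  "ess_inf M G I f = (SOME g. is_ess_inf M G I f g)"

definition ess_sup ::
  "'a measure \<Rightarrow> 'a measure \<Rightarrow> 'i set \<Rightarrow> ('i \<Rightarrow> 'a \<Rightarrow> ereal) \<Rightarrow> 'a \<Rightarrow> ereal" where
  "ess_sup M G I f = (SOME g. is_ess_sup M G I f g)"

definition L0 :: "'a measure \<Rightarrow> ('a \<Rightarrow> real) set" where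
  "L0 G = borel_measurable G"

definition L0pp :: "'a measure \<Rightarrow> 'a measure \<Rightarrow> ('a \<Rightarrow> real) set" where
  "L0pp M G = {Y \<in> L0 G. AE \<omega> in M. Y \<omega> > 0}"

definition cond_norm :: "'a measure \<Rightarrow> 'a measure \<Rightarrow> ennreal \<Rightarrow> ('a \<Rightarrow> real) \<Rightarrow> 'a \<Rightarrow> ereal" where
  "cond_norm M G p X =
     (if p = \<infinity> then
        ess_inf M G {Y :: 'a \<Rightarrow> ereal. Y \<in> borel_measurable G \<and> (AE \<omega> in M. ereal \<bar>X \<omega>\<bar> \<le> Y \<omega>)} (\<lambda>Y. Y)
      else
        (\<lambda>\<omega>. let e = nn_cond_exp M G (\<lambda>\<omega>. ennreal (\<bar>X \<omega>\<bar> powr enn2real p)) \<omega>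
              in if e = \<infinity> then \<infinity> else ereal (enn2real e powr (1 / enn2real p))))"

definition LpG :: "'a measure \<Rightarrow> 'a measure \<Rightarrow> ennreal \<Rightarrow> ('a \<Rightarrow> real) set" where
  "LpG M G p = {X \<in> borel_measurable M. AE \<omega> in M. cond_norm M G p X \<omega> < \<infinity>}"

definition conj_exp :: "ennreal \<Rightarrow> ennreal" where
  "conj_exp p = (if p = 1 then \<infinity> else if p = \<infinity> then 1 else p / (p - 1))"

text \<open>P^q: densities Z = dQ/dP in L^q_G(F) with Z >= 0 and E[Z|G] = 1.\<close>
definition Pq :: "'a measure \<Rightarrow> 'a measure \<Rightarrow> ennreal \<Rightarrow> ('a \<Rightarrow> real) set" where
  "Pq M G q = {Z \<in> LpG M G q. (AE \<omega> in M. Z \<omega> \<ge> 0) \<and> (AE \<omega> in M. real_cond_exp M G Z \<omega> = 1)}"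

text \<open>K Y Z stands for K(Y, Q) with dQ/dP = Z.
Besides (i)-(vi) we require what is implicit in the paper: K maps into
bar L^0(G) (G-measurable, values in R \<union> {+infinity}) and is well defined on
a.s.-equivalence classes.\<close>
definition class_M ::
  "'a measure \<Rightarrow> 'a measure \<Rightarrow> ennreal \<Rightarrow> (('a \<Rightarrow> real) \<Rightarrow> ('a \<Rightarrow> real) \<Rightarrow> 'a \<Rightarrow> ereal) \<Rightarrow> bool" where
  "class_M M G p K \<longleftrightarrow>
   (let q = conj_exp p in
    \<comment> \<open>values in bar L^0(G)\<close>
    (\<forall>Y\<in>L0 G. \<forall>Z\<in>Pq M G q. K Y Z \<in> borel_measurable G \<and> (AE \<omega> in M. K Y Z \<omega> > -\<infinity>)) \<and>
    \<comment> \<open>well defined on equivalence classes\<close>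
    (\<forall>Y\<in>L0 G. \<forall>Y'\<in>L0 G. \<forall>Z\<in>Pq M G q. \<forall>Z'\<in>Pq M G q.
       (AE \<omega> in M. Y \<omega> = Y' \<omega>) \<longrightarrow> (AE \<omega> in M. Z \<omega> = Z' \<omega>) \<longrightarrow>
       (AE \<omega> in M. K Y Z \<omega> = K Y' Z' \<omega>)) \<and>
    \<comment> \<open>(i) nondecreasing in the first argument\<close>
    (\<forall>Y\<in>L0 G. \<forall>Y'\<in>L0 G. \<forall>Z\<in>Pq M G q.
       (AE \<omega> in M. Y \<omega> \<le> Y' \<omega>) \<longrightarrow> (AE \<omega> in M. K Y Z \<omega> \<le> K Y' Z \<omega>)) \<and>
    \<comment> \<open>(ii) locality in the first argument\<close>
    (\<forall>A\<in>sets G. \<forall>Y\<in>L0 G. \<forall>Z\<in>Pq M G q.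
       AE \<omega> in M. K (\<lambda>x. Y x * indicator A x) Z \<omega> * indicator A \<omega> = K Y Z \<omega> * indicator A \<omega>) \<and>
    \<comment> \<open>(iii)\<close>
    (\<forall>Z\<in>Pq M G q. \<forall>Z'\<in>Pq M G q.
       AE \<omega> in M. ess_inf M G (L0 G) (\<lambda>Y. K Y Z) \<omega> = ess_inf M G (L0 G) (\<lambda>Y. K Y Z') \<omega>) \<and>
    \<comment> \<open>(iv)\<close>
    (\<forall>Ys\<in>L0 G. \<forall>Zs\<in>Pq M G q. \<forall>A\<in>sets G. \<forall>\<alpha>\<in>L0 G.
       (AE \<omega> in M. \<omega> \<in> A \<longrightarrow> K Ys Zs \<omega> < ereal (\<alpha> \<omega>)) \<longrightarrow>
       (\<exists>S\<in>L0pp M G. \<exists>X\<in>LpG M G p.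
          \<forall>Y\<in>L0 G. \<forall>Z\<in>Pq M G q.
            (AE \<omega> in M. \<omega> \<in> A \<longrightarrow> K Y Z \<omega> \<ge> ereal (\<alpha> \<omega>)) \<longrightarrow>
            (AE \<omega> in M. \<omega> \<in> A \<longrightarrow>
               Ys \<omega> * S \<omega> + real_cond_exp M G (\<lambda>x. X x * Zs x) \<omega>
                 < Y \<omega> * S \<omega> + real_cond_exp M G (\<lambda>x. X x * Z x) \<omega>))) \<and>
    \<comment> \<open>(v) upward directedness\<close>
    (\<forall>X\<in>LpG M G p. \<forall>Z1\<in>Pq M G q. \<forall>Z2\<in>Pq M G q. \<exists>Z3\<in>Pq M G q.
       AE \<omega> in M.
         K (real_cond_exp M G (\<lambda>x. X x * Z1 x)) Z1 \<omega> \<le> K (real_cond_exp M G (\<lambda>x. X x * Z3 x)) Z3 \<omega> \<and>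
         K (real_cond_exp M G (\<lambda>x. X x * Z2 x)) Z2 \<omega> \<le> K (real_cond_exp M G (\<lambda>x. X x * Z3 x)) Z3 \<omega>) \<and>
    \<comment> \<open>(vi) locality in the second argument\<close>
    (\<forall>A\<in>sets G. \<forall>Y\<in>L0 G. \<forall>Z1\<in>Pq M G q. \<forall>Z2\<in>Pq M G q.
       (AE \<omega> in M. Z1 \<omega> * indicator A \<omega> = Z2 \<omega> * indicator A \<omega>) \<longrightarrow>
       (AE \<omega> in M. K Y Z1 \<omega> * indicator A \<omega> = K Y Z2 \<omega> * indicator A \<omega>)))"

definition acc_set :: "'a measure \<Rightarrow> 'a measure \<Rightarrow> ennreal \<Rightarrow> ('a \<Rightarrow> real) \<Rightarrow> ('a \<Rightarrow> real) \<Rightarrow> ('a \<Rightarrow> real) set" where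
  "acc_set M G p Ys Zs = {\<xi> \<in> LpG M G p. AE \<omega> in M. real_cond_exp M G (\<lambda>x. - \<xi> x * Zs x) \<omega> \<ge> Ys \<omega>}"

end

theory Submission
  imports Defs
begin

text \<open>
  Write \<open>\<kappa> = K(Y*,Q*)\<close> and \<open>F(Q) = ess inf {K(E[-X dQ/dP|G], Q) : X \<in> A(Y*,Q*)}\<close>.
  The lower bound \<open>\<kappa> \<le> F(Q*)\<close> is monotonicity (i): every \<open>X \<in> A(Y*,Q*)\<close> has
  \<open>E[-X dQ*/dP|G] \<ge> Y*\<close>.  For the upper bound \<open>F(Q) \<le> \<kappa>\<close> consider the \<open>G\<close>-set
  \<open>A = {\<kappa> < F(Q)}\<close> and a \<open>G\<close>-measurable level \<open>\<alpha>\<close> strictly between the two on \<open>A\<close>.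
  Property (iv) yields a separating pair \<open>(S,X)\<close>; the conditionally affine
  transformation \<open>\<xi> = X/S + c\<close> (with \<open>c\<close> chosen such that \<open>\<xi> \<in> A(Y*,Q*)\<close>) then
  gives \<open>K(E[-\<xi> dQ/dP|G], Q) \<ge> F(Q) \<ge> \<alpha>\<close> on \<open>A\<close> and hence a strict inequality which
  collapses to an identity, so \<open>A\<close> is a null set.  Thus \<open>\<kappa>\<close> is the essential supremum.
\<close>

subsection \<open>Essential infima and suprema\<close>

text \<open>Among countable subfamilies of \<open>I\<close>, some maximises the measure of a monotone
  set-valued map \<open>\<Phi>\<close>; this is the exhaustion argument behind essential infima.\<close>

lemma finite_measure_countable_exhaustion:
  fixes \<Phi> :: "'i set \<Rightarrow> 'a set"
  assumes fm: "finite_measure M"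
    and meas: "\<And>C. countable C \<Longrightarrow> C \<subseteq> I \<Longrightarrow> \<Phi> C \<in> sets M"
    and mono: "\<And>C D. C \<subseteq> D \<Longrightarrow> \<Phi> C \<subseteq> \<Phi> D"
  shows "\<exists>C. countable C \<and> C \<subseteq> I \<and>
     (\<forall>D. countable D \<and> D \<subseteq> I \<longrightarrow> measure M (\<Phi> D) \<le> measure M (\<Phi> C))"
proof -
  interpret finite_measure M by (rule fm)
  define S where "S = {measure M (\<Phi> C) | C. countable C \<and> C \<subseteq> I}"
  have "measure M (\<Phi> {}) \<in> S" unfolding S_def by blast
  then have Sne: "S \<noteq> {}" by blast
  have Sbdd: "bdd_above S" unfolding S_def bdd_above_def
    by (rule exI[of _ "measure M (space M)"]) (auto intro!: bounded_measure)
  define s where "s = Sup S"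
  have "\<forall>n::nat. \<exists>C. countable C \<and> C \<subseteq> I \<and> s - 1/(Suc n) < measure M (\<Phi> C)"
  proof
    fix n :: nat
    have "s - 1/(Suc n) < s" by simp
    then obtain x where "x \<in> S" "s - 1/(Suc n) < x"
      using less_cSup_iff[OF Sne Sbdd] unfolding s_def by blast
    then show "\<exists>C. countable C \<and> C \<subseteq> I \<and> s - 1/(Suc n) < measure M (\<Phi> C)"
      unfolding S_def by auto
  qed
  then obtain Cn where Cn: "\<And>n. countable (Cn n)" "\<And>n. Cn n \<subseteq> I"
      "\<And>n. s - 1/(Suc n) < measure M (\<Phi> (Cn n))" by metis
  define C where "C = (\<Union>n. Cn n)"
  have cC: "countable C" "C \<subseteq> I" unfolding C_def using Cn by auto
  have ge: "s \<le> measure M (\<Phi> C)"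
  proof (rule field_le_epsilon)
    fix e :: real assume "0 < e"
    then obtain n :: nat where "1 / real (Suc n) < e"
      using nat_approx_posE by blast
    have "measure M (\<Phi> (Cn n)) \<le> measure M (\<Phi> C)"
      by (rule finite_measure_mono[OF mono meas[OF cC]]) (auto simp: C_def)
    then show "s \<le> measure M (\<Phi> C) + e" using Cn(3)[of n] \<open>1 / real (Suc n) < e\<close> by linarith
  qed
  show ?thesis
  proof (intro exI conjI allI impI)
    fix D assume "countable D \<and> D \<subseteq> I"
    then have "measure M (\<Phi> D) \<in> S" unfolding S_def by auto
    then have "measure M (\<Phi> D) \<le> s" unfolding s_def using Sbdd by (rule cSup_upper)
    then show "measure M (\<Phi> D) \<le> measure M (\<Phi> C)" using ge by linarith
  qed (use cC in auto)
qed

definition dips_below :: "'a measure \<Rightarrow> ('i \<Rightarrow> 'a \<Rightarrow> ereal) \<Rightarrow> 'i set \<Rightarrow> real \<Rightarrow> 'a set" where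
  "dips_below M f C r = {\<omega> \<in> space M. \<exists>i\<in>C. f i \<omega> < ereal r}"

lemma dips_below_sets:
  assumes "countable C" "\<And>i. i \<in> C \<Longrightarrow> f i \<in> borel_measurable M"
  shows "dips_below M f C r \<in> sets M"
proof -
  have "dips_below M f C r = (\<Union>i\<in>C. {\<omega> \<in> space M. f i \<omega> < ereal r})"
    unfolding dips_below_def by auto
  also have "\<dots> \<in> sets M" using assms by (intro sets.countable_UN') auto
  finally show ?thesis .
qed

lemma INF_le_if_dips_below_maximal:
  fixes f :: "'i \<Rightarrow> 'a \<Rightarrow> ereal"
  assumes fm: "finite_measure M" and C: "countable C"
    and meas: "\<And>j. j \<in> insert i C \<Longrightarrow> f j \<in> borel_measurable M"
    and maximal: "\<And>r::rat. measure M (dips_below M f (insert i C) (real_of_rat r))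
                           \<le> measure M (dips_below M f C (real_of_rat r))"
  shows "AE \<omega> in M. (INF j\<in>C. f j \<omega>) \<le> f i \<omega>"
proof -
  interpret finite_measure M by (rule fm)
  define g where "g = (\<lambda>\<omega>. INF j\<in>C. f j \<omega>)"
  have [measurable]: "g \<in> borel_measurable M" "f i \<in> borel_measurable M"
    unfolding g_def using C meas by (auto intro: borel_measurable_INF)
  \<comment> \<open>\<open>B r\<close> is disjoint from \<open>dips_below M f C r\<close> but contained in the enlarged event\<close>
  define B where "B = (\<lambda>r::rat. {\<omega> \<in> space M. f i \<omega> < ereal (real_of_rat r) \<and> ereal (real_of_rat r) < g \<omega>})"
  have Bnull: "B r \<in> null_sets M" for r
  proof -
    let ?U = "dips_below M f C (real_of_rat r)"
    let ?U' = "dips_below M f (insert i C) (real_of_rat r)"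
    have Bs: "B r \<in> sets M" unfolding B_def by measurable
    have Us: "?U \<in> sets M" "?U' \<in> sets M"
      using C meas by (auto intro!: dips_below_sets)
    have disj: "?U \<inter> B r = {}"
    proof (rule ccontr)
      assume "?U \<inter> B r \<noteq> {}"
      then obtain \<omega> j where "j \<in> C" "f j \<omega> < ereal (real_of_rat r)" "ereal (real_of_rat r) < g \<omega>"
        unfolding dips_below_def B_def by auto
      moreover have "g \<omega> \<le> f j \<omega>" unfolding g_def using \<open>j \<in> C\<close> by (rule INF_lower)
      ultimately show False by auto
    qed
    have sub_U': "?U \<union> B r \<subseteq> ?U'" unfolding dips_below_def B_def by auto
    have "measure M ?U + measure M (B r) = measure M (?U \<union> B r)"
      by (rule finite_measure_Union[symmetric]) (use Us Bs disj in auto)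
    also have "\<dots> \<le> measure M ?U'" by (rule finite_measure_mono[OF sub_U' Us(2)])
    also have "\<dots> \<le> measure M ?U" by (rule maximal)
    finally have "measure M (B r) = 0" using measure_nonneg[of M "B r"] by linarith
    then show ?thesis using Bs by (simp add: emeasure_eq_measure null_setsI)
  qed
  have "AE \<omega> in M. \<forall>r. \<omega> \<notin> B r"
    using Bnull by (subst AE_all_countable) (auto intro: AE_not_in)
  then have "AE \<omega> in M. g \<omega> \<le> f i \<omega>" using AE_space
  proof eventually_elim
    case (elim \<omega>)
    show "g \<omega> \<le> f i \<omega>"
    proof (rule ccontr)
      assume "\<not> g \<omega> \<le> f i \<omega>"
      then have lt: "f i \<omega> < g \<omega>" by simp
      obtain z1 :: real where z1: "f i \<omega> < ereal z1" "ereal z1 < g \<omega>"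
        using ereal_dense2[OF lt] by blast
      obtain z2 :: real where z2: "ereal z1 < ereal z2" "ereal z2 < g \<omega>"
        using ereal_dense2[OF z1(2)] by blast
      obtain r :: rat where r: "z1 < real_of_rat r" "real_of_rat r < z2"
        using of_rat_dense z2(1) by auto
      have "ereal z1 < ereal (real_of_rat r)" "ereal (real_of_rat r) < ereal z2"
        using r by simp_all
      then have "f i \<omega> < ereal (real_of_rat r)" "ereal (real_of_rat r) < g \<omega>"
        using z1(1) z2(2) by (blast intro: less_trans)+
      then show False using elim unfolding B_def by auto
    qed
  qed
  then show ?thesis unfolding g_def .
qed

text \<open>The essential infimum of a family of \<open>G\<close>-measurable extended-real variables
  exists and is the pointwise infimum over a suitable countable subfamily: take, for
  each rational level, a countable subfamily whose \<open>dips_below\<close> event has maximal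
  measure, and the union of these.\<close>

lemma ess_inf_countable:
  fixes f :: "'i \<Rightarrow> 'a \<Rightarrow> ereal"
  assumes P: "prob_space M" and sub: "subalgebra M G"
    and fm: "\<And>i. i \<in> I \<Longrightarrow> f i \<in> borel_measurable G"
  shows "\<exists>C. countable C \<and> C \<subseteq> I \<and> is_ess_inf M G I f (\<lambda>\<omega>. INF i\<in>C. f i \<omega>)"
proof -
  interpret prob_space M by (rule P)
  have fmM: "f i \<in> borel_measurable M" if "i \<in> I" for i
    using measurable_from_subalg[OF sub fm[OF that]] .
  have "\<forall>r::rat. \<exists>C. countable C \<and> C \<subseteq> I \<and>
     (\<forall>D. countable D \<and> D \<subseteq> I \<longrightarrow>
        measure M (dips_below M f D (real_of_rat r)) \<le> measure M (dips_below M f C (real_of_rat r)))"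
  proof
    fix r :: rat
    show "\<exists>C. countable C \<and> C \<subseteq> I \<and>
      (\<forall>D. countable D \<and> D \<subseteq> I \<longrightarrow>
        measure M (dips_below M f D (real_of_rat r)) \<le> measure M (dips_below M f C (real_of_rat r)))"
    proof (rule finite_measure_countable_exhaustion[OF finite_measure_axioms])
      show "dips_below M f C (real_of_rat r) \<in> sets M" if "countable C" "C \<subseteq> I" for C
        using that fmM by (intro dips_below_sets) auto
      show "dips_below M f C (real_of_rat r) \<subseteq> dips_below M f D (real_of_rat r)" if "C \<subseteq> D" for C D
        using that unfolding dips_below_def by auto
    qed
  qed
  then obtain Cr where Cr: "\<And>r. countable (Cr r)" "\<And>r. Cr r \<subseteq> I"
    "\<And>r D. countable D \<Longrightarrow> D \<subseteq> I \<Longrightarrow>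
       measure M (dips_below M f D (real_of_rat r)) \<le> measure M (dips_below M f (Cr r) (real_of_rat r))"
    by metis
  define C where "C = (\<Union>r. Cr r)"
  have cC: "countable C" "C \<subseteq> I" unfolding C_def using Cr by auto
  have gmeas: "(\<lambda>\<omega>. INF i\<in>C. f i \<omega>) \<in> borel_measurable G"
    using cC fm by (intro borel_measurable_INF) auto
  have lower: "AE \<omega> in M. (INF j\<in>C. f j \<omega>) \<le> f i \<omega>" if iI: "i \<in> I" for i
  proof (rule INF_le_if_dips_below_maximal[OF finite_measure_axioms cC(1)])
    show "f j \<in> borel_measurable M" if "j \<in> insert i C" for j using that iI cC fmM by auto
    fix r :: rat
    have "dips_below M f (Cr r) (real_of_rat r) \<subseteq> dips_below M f C (real_of_rat r)"
      unfolding dips_below_def C_def by auto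
    then have "measure M (dips_below M f (Cr r) (real_of_rat r)) \<le> measure M (dips_below M f C (real_of_rat r))"
      using cC fmM by (intro finite_measure_mono dips_below_sets) auto
    moreover have "measure M (dips_below M f (insert i C) (real_of_rat r))
        \<le> measure M (dips_below M f (Cr r) (real_of_rat r))"
      using cC iI by (intro Cr(3)) auto
    ultimately show "measure M (dips_below M f (insert i C) (real_of_rat r))
        \<le> measure M (dips_below M f C (real_of_rat r))" by linarith
  qed
  have greatest: "AE \<omega> in M. h \<omega> \<le> (INF i\<in>C. f i \<omega>)"
    if "h \<in> borel_measurable G" "\<forall>i\<in>I. AE \<omega> in M. h \<omega> \<le> f i \<omega>" for h
  proof -
    have "AE \<omega> in M. \<forall>i\<in>C. h \<omega> \<le> f i \<omega>"
      using that cC by (subst AE_ball_countable[OF cC(1)]) auto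
    then show ?thesis by (auto intro: INF_greatest)
  qed
  show ?thesis unfolding is_ess_inf_def using cC gmeas lower greatest by blast
qed

lemma is_ess_inf_ess_inf:
  assumes "prob_space M" "subalgebra M G" "\<And>i. i \<in> I \<Longrightarrow> f i \<in> borel_measurable G"
  shows "is_ess_inf M G I f (ess_inf M G I f)"
proof -
  obtain C where "is_ess_inf M G I f (\<lambda>\<omega>. INF i\<in>C. f i \<omega>)"
    using ess_inf_countable[of M G I f, OF assms] by blast
  then show ?thesis unfolding ess_inf_def by (rule someI[where P="is_ess_inf M G I f"])
qed

lemma is_ess_inf_unique:
  assumes "is_ess_inf M G I f g1" "is_ess_inf M G I f g2"
  shows "AE \<omega> in M. g1 \<omega> = g2 \<omega>"
proof -
  have "AE \<omega> in M. g1 \<omega> \<le> g2 \<omega>" using assms unfolding is_ess_inf_def by blast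
  moreover have "AE \<omega> in M. g2 \<omega> \<le> g1 \<omega>" using assms unfolding is_ess_inf_def by blast
  ultimately show ?thesis by eventually_elim simp
qed

lemma is_ess_sup_AE_eq:
  assumes "is_ess_sup M G I f g"
  shows "AE \<omega> in M. g \<omega> = ess_sup M G I f \<omega>"
proof -
  have "is_ess_sup M G I f (ess_sup M G I f)"
    unfolding ess_sup_def using assms by (rule someI[where P="is_ess_sup M G I f"])
  then have "AE \<omega> in M. g \<omega> \<le> ess_sup M G I f \<omega>"
    using assms unfolding is_ess_sup_def by blast
  moreover have "AE \<omega> in M. ess_sup M G I f \<omega> \<le> g \<omega>"
    using \<open>is_ess_sup M G I f (ess_sup M G I f)\<close> assms unfolding is_ess_sup_def by blast
  ultimately show ?thesis by eventually_elim simp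
qed

subsection \<open>The generalised conditional expectation as an \<open>L\<^sup>0(G)\<close>-linear map\<close>

text \<open>A variable is conditionally integrable if \<open>E[|f| | G] < \<infinity>\<close> a.s. (the space
  \<open>L\<^sup>1\<^sub>G(F) = L\<^sup>0(G)\<cdot>L\<^sup>1(F)\<close>); on it \<open>real_cond_exp\<close> is \<open>L\<^sup>0(G)\<close>-linear.\<close>

definition cond_integrable :: "'a measure \<Rightarrow> 'a measure \<Rightarrow> ('a \<Rightarrow> real) \<Rightarrow> bool" where
  "cond_integrable M G f \<longleftrightarrow>
     f \<in> borel_measurable M \<and> (AE x in M. nn_cond_exp M G (\<lambda>x. ennreal \<bar>f x\<bar>) x \<noteq> \<infinity>)"

text \<open>Pointwise splitting of products and sums into positive and negative parts, in
  the form needed to transport them through the nonnegative conditional expectation.\<close>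

lemma ennreal_mult_parts:
  fixes u f :: real
  shows "ennreal (u * f) = ennreal u * ennreal f + ennreal (-u) * ennreal (-f)"
proof (cases "u \<ge> 0")
  case True
  then show ?thesis
    by (cases "f \<ge> 0") (simp_all add: ennreal_neg ennreal_mult[symmetric] mult_nonneg_nonpos)
next
  case False
  then show ?thesis
    by (cases "f \<ge> 0") (simp_all add: ennreal_neg ennreal_mult[symmetric] mult_nonpos_nonneg)
qed

lemma ennreal_add_parts:
  fixes a b :: real
  shows "ennreal (a + b) + ennreal (-a) + ennreal (-b) = ennreal (-(a + b)) + ennreal a + ennreal b"
proof -
  have pos: "ennreal (max x 0) = ennreal x" for x :: real
    by (cases "x \<ge> 0") (auto simp: ennreal_neg max_def)
  have "ennreal (max (a + b) 0 + max (-a) 0 + max (-b) 0) = ennreal (max (-(a + b)) 0 + max a 0 + max b 0)"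
    by (rule arg_cong[where f=ennreal]) linarith
  then show ?thesis by (simp add: ennreal_plus pos)
qed

lemma enn2real_balance:
  fixes a b c d e k :: ennreal
  assumes "a + d + k = b + c + e" "a \<noteq> \<infinity>" "b \<noteq> \<infinity>" "c \<noteq> \<infinity>" "d \<noteq> \<infinity>" "e \<noteq> \<infinity>" "k \<noteq> \<infinity>"
  shows "enn2real a - enn2real b = (enn2real c - enn2real d) + (enn2real e - enn2real k)"
proof -
  have "enn2real (a + d + k) = enn2real (b + c + e)" by (simp only: assms(1))
  moreover have "enn2real (a + d + k) = enn2real a + enn2real d + enn2real k"
    using assms(2-7) by (simp add: enn2real_plus less_top[symmetric] ennreal_add_eq_top)
  moreover have "enn2real (b + c + e) = enn2real b + enn2real c + enn2real e"
    using assms(2-7) by (simp add: enn2real_plus less_top[symmetric] ennreal_add_eq_top)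
  ultimately show ?thesis by simp
qed

context sigma_finite_subalgebra
begin

lemma nn_cond_exp_finite_dominated:
  assumes [measurable]: "h \<in> borel_measurable M" "gA \<in> borel_measurable M" "gB \<in> borel_measurable M"
    "aA \<in> borel_measurable F" "aB \<in> borel_measurable F" "b \<in> borel_measurable F"
    and le: "AE x in M. h x \<le> ennreal (aA x) * gA x + ennreal (aB x) * gB x + ennreal (b x)"
    and fA: "AE x in M. nn_cond_exp M F gA x \<noteq> \<infinity>"
    and fB: "AE x in M. nn_cond_exp M F gB x \<noteq> \<infinity>"
  shows "AE x in M. nn_cond_exp M F h x \<noteq> \<infinity>"
proof -
  have [measurable]: "aA \<in> borel_measurable M" "aB \<in> borel_measurable M" "b \<in> borel_measurable M"
    by (rule measurable_from_subalg[OF subalg], simp)+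
  let ?N = "nn_cond_exp M F"
  let ?bound = "\<lambda>x. ennreal (aA x) * gA x + ennreal (aB x) * gB x + ennreal (b x)"
  have s1: "AE x in M. ?N (\<lambda>x. ennreal (aA x) * gA x + ennreal (aB x) * gB x) x + ?N (\<lambda>x. ennreal (b x)) x
      = ?N ?bound x"
    by (rule nn_cond_exp_sum) auto
  have s2: "AE x in M. ?N (\<lambda>x. ennreal (aA x) * gA x) x + ?N (\<lambda>x. ennreal (aB x) * gB x) x
      = ?N (\<lambda>x. ennreal (aA x) * gA x + ennreal (aB x) * gB x) x"
    by (rule nn_cond_exp_sum) auto
  have p1: "AE x in M. ennreal (aA x) * ?N gA x = ?N (\<lambda>x. ennreal (aA x) * gA x) x"
    by (rule nn_cond_exp_prod) auto
  have p2: "AE x in M. ennreal (aB x) * ?N gB x = ?N (\<lambda>x. ennreal (aB x) * gB x) x"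
    by (rule nn_cond_exp_prod) auto
  have b: "AE x in M. ennreal (b x) = ?N (\<lambda>x. ennreal (b x)) x"
    by (rule nn_cond_exp_F_meas) auto
  have "AE x in M. ?N ?bound x \<noteq> \<infinity>"
    using s1 s2 p1 p2 b fA fB
  proof eventually_elim
    case (elim x)
    have "ennreal (aA x) * ?N gA x \<noteq> \<top>" "ennreal (aB x) * ?N gB x \<noteq> \<top>"
      using elim(6,7) by (simp_all add: ennreal_mult_eq_top_iff)
    then show ?case using elim by (metis ennreal_add_eq_top ennreal_neq_top infinity_ennreal_def)
  qed
  then show ?thesis using nn_cond_exp_mono[OF le] by (auto simp: top_unique)
qed

lemma cond_integrable_parts:
  assumes "cond_integrable M F f"
  shows "AE x in M. nn_cond_exp M F (\<lambda>x. ennreal (f x)) x \<noteq> \<infinity> \<and>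
                    nn_cond_exp M F (\<lambda>x. ennreal (- f x)) x \<noteq> \<infinity>"
proof -
  have [measurable]: "f \<in> borel_measurable M" using assms unfolding cond_integrable_def by simp
  have "AE x in M. nn_cond_exp M F (\<lambda>x. ennreal (f x)) x \<le> nn_cond_exp M F (\<lambda>x. ennreal \<bar>f x\<bar>) x"
       "AE x in M. nn_cond_exp M F (\<lambda>x. ennreal (- f x)) x \<le> nn_cond_exp M F (\<lambda>x. ennreal \<bar>f x\<bar>) x"
    by (auto intro!: nn_cond_exp_mono ennreal_leI)
  moreover have "AE x in M. nn_cond_exp M F (\<lambda>x. ennreal \<bar>f x\<bar>) x \<noteq> \<infinity>"
    using assms unfolding cond_integrable_def by simp
  ultimately show ?thesis by eventually_elim (auto simp: top_unique)
qed

lemma cond_integrable_dominated_mult: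
  assumes f: "cond_integrable M F f" and [measurable]: "u \<in> borel_measurable M"
    and [measurable]: "g \<in> borel_measurable F" and dom: "AE x in M. \<bar>u x\<bar> \<le> g x"
  shows "cond_integrable M F (\<lambda>x. u x * f x)"
proof -
  have [measurable]: "f \<in> borel_measurable M" using f unfolding cond_integrable_def by simp
  have "AE x in M. nn_cond_exp M F (\<lambda>x. ennreal \<bar>u x * f x\<bar>) x \<noteq> \<infinity>"
  proof (rule nn_cond_exp_finite_dominated[where gA="\<lambda>x. ennreal \<bar>f x\<bar>" and gB="\<lambda>x. ennreal \<bar>f x\<bar>"
        and aA="\<lambda>x. \<bar>g x\<bar>" and aB="\<lambda>x. 0" and b="\<lambda>x. 0"])
    show "AE x in M. ennreal \<bar>u x * f x\<bar>
        \<le> ennreal \<bar>g x\<bar> * ennreal \<bar>f x\<bar> + ennreal 0 * ennreal \<bar>f x\<bar> + ennreal 0"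
      using dom
    proof eventually_elim
      case (elim x)
      have "\<bar>u x * f x\<bar> \<le> \<bar>g x\<bar> * \<bar>f x\<bar>"
        unfolding abs_mult using elim by (intro mult_right_mono) auto
      then have "ennreal \<bar>u x * f x\<bar> \<le> ennreal (\<bar>g x\<bar> * \<bar>f x\<bar>)" by (rule ennreal_leI)
      then show ?case by (simp add: ennreal_mult)
    qed
  qed (use f in \<open>auto simp: cond_integrable_def infinity_ennreal_def\<close>)
  then show ?thesis unfolding cond_integrable_def by simp
qed

lemma cond_integrable_add:
  assumes f: "cond_integrable M F f" and g: "cond_integrable M F g"
  shows "cond_integrable M F (\<lambda>x. f x + g x)"
proof -
  have [measurable]: "f \<in> borel_measurable M" "g \<in> borel_measurable M"
    using f g unfolding cond_integrable_def by simp_all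
  have "AE x in M. nn_cond_exp M F (\<lambda>x. ennreal \<bar>f x + g x\<bar>) x \<noteq> \<infinity>"
  proof (rule nn_cond_exp_finite_dominated[where gA="\<lambda>x. ennreal \<bar>f x\<bar>" and gB="\<lambda>x. ennreal \<bar>g x\<bar>"
        and aA="\<lambda>x. 1" and aB="\<lambda>x. 1" and b="\<lambda>x. 0"])
    show "AE x in M. ennreal \<bar>f x + g x\<bar>
        \<le> ennreal 1 * ennreal \<bar>f x\<bar> + ennreal 1 * ennreal \<bar>g x\<bar> + ennreal 0"
      by (intro AE_I2) (simp add: ennreal_plus[symmetric] ennreal_leI abs_triangle_ineq del: ennreal_plus)
  qed (use f g in \<open>auto simp: cond_integrable_def infinity_ennreal_def\<close>)
  then show ?thesis unfolding cond_integrable_def by simp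
qed

lemma nn_cond_exp_mult_parts:
  assumes [measurable]: "u \<in> borel_measurable F" "f \<in> borel_measurable M"
  shows "AE x in M. nn_cond_exp M F (\<lambda>x. ennreal (u x * f x)) x
      = ennreal (u x) * nn_cond_exp M F (\<lambda>x. ennreal (f x)) x
        + ennreal (-u x) * nn_cond_exp M F (\<lambda>x. ennreal (-f x)) x"
proof -
  have [measurable]: "u \<in> borel_measurable M" by (rule measurable_from_subalg[OF subalg]) simp
  let ?N = "nn_cond_exp M F"
  have sum: "AE x in M. ?N (\<lambda>x. ennreal (u x) * ennreal (f x)) x + ?N (\<lambda>x. ennreal (-u x) * ennreal (-f x)) x
     = ?N (\<lambda>x. ennreal (u x) * ennreal (f x) + ennreal (-u x) * ennreal (-f x)) x"
    by (rule nn_cond_exp_sum) auto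
  have p1: "AE x in M. ennreal (u x) * ?N (\<lambda>x. ennreal (f x)) x = ?N (\<lambda>x. ennreal (u x) * ennreal (f x)) x"
    by (rule nn_cond_exp_prod) auto
  have p2: "AE x in M. ennreal (-u x) * ?N (\<lambda>x. ennreal (-f x)) x = ?N (\<lambda>x. ennreal (-u x) * ennreal (-f x)) x"
    by (rule nn_cond_exp_prod) auto
  show ?thesis using sum p1 p2 unfolding ennreal_mult_parts by auto
qed

lemma real_cond_exp_mult_F:
  assumes [measurable]: "u \<in> borel_measurable F" "f \<in> borel_measurable M"
  shows "AE x in M. real_cond_exp M F (\<lambda>x. u x * f x) x = u x * real_cond_exp M F f x"
proof -
  have neg: "(\<lambda>x. - (u x * f x)) = (\<lambda>x. u x * - f x)" by simp
  have pos: "AE x in M. nn_cond_exp M F (\<lambda>x. ennreal (u x * f x)) x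
      = ennreal (u x) * nn_cond_exp M F (\<lambda>x. ennreal (f x)) x
        + ennreal (-u x) * nn_cond_exp M F (\<lambda>x. ennreal (-f x)) x"
    by (rule nn_cond_exp_mult_parts) auto
  have "AE x in M. nn_cond_exp M F (\<lambda>x. ennreal (u x * - f x)) x
      = ennreal (u x) * nn_cond_exp M F (\<lambda>x. ennreal (- f x)) x
        + ennreal (-u x) * nn_cond_exp M F (\<lambda>x. ennreal (- (- f x))) x"
    by (rule nn_cond_exp_mult_parts) auto
  then show ?thesis using pos unfolding real_cond_exp_def neg
  proof eventually_elim
    case (elim x)
    then show ?case
      by (cases "u x \<ge> 0") (simp_all add: ennreal_neg enn2real_mult right_diff_distrib)
  qed
qed

lemma nn_cond_exp_add_parts:
  assumes [measurable]: "f \<in> borel_measurable M" "g \<in> borel_measurable M"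
  shows "AE x in M.
      nn_cond_exp M F (\<lambda>x. ennreal (f x + g x)) x + nn_cond_exp M F (\<lambda>x. ennreal (-f x)) x
        + nn_cond_exp M F (\<lambda>x. ennreal (-g x)) x
    = nn_cond_exp M F (\<lambda>x. ennreal (-(f x + g x))) x + nn_cond_exp M F (\<lambda>x. ennreal (f x)) x
        + nn_cond_exp M F (\<lambda>x. ennreal (g x)) x"
proof -
  let ?N = "nn_cond_exp M F"
  have L1: "AE x in M. ?N (\<lambda>x. ennreal (f x + g x) + ennreal (-f x)) x + ?N (\<lambda>x. ennreal (-g x)) x
     = ?N (\<lambda>x. ennreal (f x + g x) + ennreal (-f x) + ennreal (-g x)) x"
    by (rule nn_cond_exp_sum) auto
  have L2: "AE x in M. ?N (\<lambda>x. ennreal (f x + g x)) x + ?N (\<lambda>x. ennreal (-f x)) x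
     = ?N (\<lambda>x. ennreal (f x + g x) + ennreal (-f x)) x"
    by (rule nn_cond_exp_sum) auto
  have R1: "AE x in M. ?N (\<lambda>x. ennreal (-(f x + g x)) + ennreal (f x)) x + ?N (\<lambda>x. ennreal (g x)) x
     = ?N (\<lambda>x. ennreal (-(f x + g x)) + ennreal (f x) + ennreal (g x)) x"
    by (rule nn_cond_exp_sum) auto
  have R2: "AE x in M. ?N (\<lambda>x. ennreal (-(f x + g x))) x + ?N (\<lambda>x. ennreal (f x)) x
     = ?N (\<lambda>x. ennreal (-(f x + g x)) + ennreal (f x)) x"
    by (rule nn_cond_exp_sum) auto
  show ?thesis using L1 L2 R1 R2 unfolding ennreal_add_parts by auto
qed

text \<open>Additivity of the generalised conditional expectation on conditionally
  integrable variables (the library version needs integrability).\<close>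

lemma real_cond_exp_add_cond_integrable:
  assumes f: "cond_integrable M F f" and g: "cond_integrable M F g"
  shows "AE x in M. real_cond_exp M F (\<lambda>x. f x + g x) x = real_cond_exp M F f x + real_cond_exp M F g x"
proof -
  have [measurable]: "f \<in> borel_measurable M" "g \<in> borel_measurable M"
    using f g unfolding cond_integrable_def by simp_all
  have parts: "AE x in M.
      nn_cond_exp M F (\<lambda>x. ennreal (f x + g x)) x + nn_cond_exp M F (\<lambda>x. ennreal (-f x)) x
        + nn_cond_exp M F (\<lambda>x. ennreal (-g x)) x
    = nn_cond_exp M F (\<lambda>x. ennreal (-(f x + g x))) x + nn_cond_exp M F (\<lambda>x. ennreal (f x)) x
        + nn_cond_exp M F (\<lambda>x. ennreal (g x)) x"
    by (rule nn_cond_exp_add_parts) auto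
  show ?thesis
    using parts cond_integrable_parts[OF cond_integrable_add[OF f g]]
      cond_integrable_parts[OF f] cond_integrable_parts[OF g]
    unfolding real_cond_exp_def by eventually_elim (auto dest!: enn2real_balance)
qed

end

subsection \<open>The conditional spaces \<open>L\<^sup>p\<^sub>G(F)\<close> and the densities \<open>P\<^sup>q\<close>\<close>

lemma prob_space_sigma_finite_subalgebra:
  assumes "prob_space M" "subalgebra M G"
  shows "sigma_finite_subalgebra M G"
proof -
  interpret prob_space M by fact
  interpret finite_measure_subalgebra M G by unfold_locales (rule assms(2))
  show ?thesis by unfold_locales
qed

lemma conj_exp_cases:
  assumes "1 \<le> p"
  obtains "p = 1" "conj_exp p = \<infinity>"
    | "p = \<infinity>" "conj_exp p = 1"
    | r where "1 < r" "p = ennreal r" "conj_exp p = ennreal (r / (r - 1))"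
proof (cases "p = 1 \<or> p = \<infinity>")
  case True
  then show ?thesis using that by (auto simp: conj_exp_def)
next
  case False
  define r where "r = enn2real p"
  have pr: "p = ennreal r" unfolding r_def using False by (simp add: ennreal_enn2real_if)
  have "1 \<le> r" using assms pr by (simp add: ennreal_le_iff2 flip: ennreal_1)
  moreover have "r \<noteq> 1" using False pr by auto
  ultimately have r1: "1 < r" by simp
  have "p - 1 = ennreal (r - 1)" using pr by (simp add: ennreal_minus flip: ennreal_1)
  then have "conj_exp p = ennreal (r / (r - 1))"
    using False r1 pr by (simp add: conj_exp_def divide_ennreal)
  then show ?thesis using that r1 pr by blast
qed

lemma LpG_finite_iff:
  assumes "p \<noteq> \<infinity>"
  shows "X \<in> LpG M G p \<longleftrightarrow> X \<in> borel_measurable M \<and>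
     (AE \<omega> in M. nn_cond_exp M G (\<lambda>\<omega>. ennreal (\<bar>X \<omega>\<bar> powr enn2real p)) \<omega> \<noteq> \<infinity>)"
  unfolding LpG_def cond_norm_def using assms by (simp add: Let_def)

lemma LpG_one_cond_integrable:
  assumes "X \<in> LpG M G 1"
  shows "cond_integrable M G X"
  using assms unfolding cond_integrable_def by (subst (asm) LpG_finite_iff) auto

lemma LpG_infinity_dominated:
  assumes P: "prob_space M" and sub: "subalgebra M G" and X: "X \<in> LpG M G \<infinity>"
  obtains g where "g \<in> borel_measurable G" "AE \<omega> in M. \<bar>X \<omega>\<bar> \<le> g \<omega>"
proof -
  define I where "I = {Y :: 'a \<Rightarrow> ereal. Y \<in> borel_measurable G \<and> (AE \<omega> in M. ereal \<bar>X \<omega>\<bar> \<le> Y \<omega>)}"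
  have EI: "is_ess_inf M G I (\<lambda>Y. Y) (ess_inf M G I (\<lambda>Y. Y))"
    by (rule is_ess_inf_ess_inf[OF P sub]) (simp add: I_def)
  obtain C where C: "countable C" "C \<subseteq> I" "is_ess_inf M G I (\<lambda>Y. Y) (\<lambda>\<omega>. INF Y\<in>C. Y \<omega>)"
    using ess_inf_countable[OF P sub, of I "\<lambda>Y. Y"] by (auto simp: I_def)
  have "AE \<omega> in M. cond_norm M G \<infinity> X \<omega> < \<infinity>" using X unfolding LpG_def by auto
  moreover have "AE \<omega> in M. ess_inf M G I (\<lambda>Y. Y) \<omega> = (INF Y\<in>C. Y \<omega>)"
    by (rule is_ess_inf_unique[OF EI C(3)])
  ultimately have fin: "AE \<omega> in M. (INF Y\<in>C. Y \<omega>) < \<infinity>"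
    unfolding cond_norm_def I_def by eventually_elim auto
  have bd: "AE \<omega> in M. \<forall>Y\<in>C. ereal \<bar>X \<omega>\<bar> \<le> Y \<omega>"
    using C(1,2) unfolding I_def by (subst AE_ball_countable[OF C(1)]) auto
  define g where "g = (\<lambda>\<omega>. real_of_ereal (INF Y\<in>C. Y \<omega>))"
  have "g \<in> borel_measurable G" unfolding g_def
    using C(1,2) unfolding I_def by (intro borel_measurable_real_of_ereal borel_measurable_INF) auto
  moreover have "AE \<omega> in M. \<bar>X \<omega>\<bar> \<le> g \<omega>"
    using fin bd
  proof eventually_elim
    case (elim \<omega>)
    have le: "ereal \<bar>X \<omega>\<bar> \<le> (INF Y\<in>C. Y \<omega>)" using elim(2) by (auto intro: INF_greatest)
    then have "(INF Y\<in>C. Y \<omega>) = ereal (g \<omega>)" unfolding g_def using elim(1)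
      by (cases "(INF Y\<in>C. Y \<omega>)") auto
    then show ?case using le by simp
  qed
  ultimately show ?thesis by (rule that)
qed

lemma LpG_infinityI:
  assumes P: "prob_space M" and sub: "subalgebra M G" and Xm: "X \<in> borel_measurable M"
    and gm: "g \<in> borel_measurable G" and bd: "AE \<omega> in M. \<bar>X \<omega>\<bar> \<le> g \<omega>"
  shows "X \<in> LpG M G \<infinity>"
proof -
  define I where "I = {Y :: 'a \<Rightarrow> ereal. Y \<in> borel_measurable G \<and> (AE \<omega> in M. ereal \<bar>X \<omega>\<bar> \<le> Y \<omega>)}"
  have EI: "is_ess_inf M G I (\<lambda>Y. Y) (ess_inf M G I (\<lambda>Y. Y))"
    by (rule is_ess_inf_ess_inf[OF P sub]) (simp add: I_def)
  have "(\<lambda>\<omega>. ereal (g \<omega>)) \<in> I" unfolding I_def using gm bd by auto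
  then have le: "AE \<omega> in M. ess_inf M G I (\<lambda>Y. Y) \<omega> \<le> ereal (g \<omega>)"
    using EI unfolding is_ess_inf_def by (elim conjE) (drule bspec)
  have cn: "cond_norm M G \<infinity> X = ess_inf M G I (\<lambda>Y. Y)"
    unfolding cond_norm_def I_def by (simp only: simp_thms if_True)
  have "AE \<omega> in M. cond_norm M G \<infinity> X \<omega> < \<infinity>"
    using le unfolding cn by eventually_elim (auto simp: top_unique)
  then show ?thesis unfolding LpG_def using Xm by blast
qed

text \<open>Every density in \<open>P\<^sup>q\<close> is conditionally integrable, since \<open>E[Z|G] = 1\<close> and \<open>Z \<ge> 0\<close>.\<close>

lemma Pq_cond_integrable:
  assumes P: "prob_space M" and sub: "subalgebra M G" and W: "W \<in> Pq M G q"
  shows "cond_integrable M G W"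
proof -
  interpret sigma_finite_subalgebra M G using prob_space_sigma_finite_subalgebra[OF P sub] .
  have Wm[measurable]: "W \<in> borel_measurable M" and W0: "AE x in M. W x \<ge> 0"
    and W1: "AE x in M. real_cond_exp M G W x = 1"
    using W unfolding Pq_def LpG_def by auto
  have neg: "AE x in M. nn_cond_exp M G (\<lambda>x. ennreal (- W x)) x = nn_cond_exp M G (\<lambda>x. 0) x"
    by (rule nn_cond_exp_cong) (use W0 in \<open>auto simp: ennreal_neg\<close>)
  have zero: "AE x in M. (0::ennreal) = nn_cond_exp M G (\<lambda>x. 0) x"
    by (rule nn_cond_exp_F_meas) simp
  have abs: "AE x in M. nn_cond_exp M G (\<lambda>x. ennreal \<bar>W x\<bar>) x = nn_cond_exp M G (\<lambda>x. ennreal (W x)) x"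
    by (rule nn_cond_exp_cong) (use W0 in auto)
  have "AE x in M. nn_cond_exp M G (\<lambda>x. ennreal \<bar>W x\<bar>) x \<noteq> \<infinity>"
    using neg zero abs W1
  proof eventually_elim
    case (elim x)
    then have "enn2real (nn_cond_exp M G (\<lambda>x. ennreal (W x)) x) = 1"
      unfolding real_cond_exp_def by simp
    then show ?case using elim(3) by auto
  qed
  then show ?thesis unfolding cond_integrable_def by simp
qed

text \<open>Pointwise dominations, in the shape required by \<open>nn_cond_exp_finite_dominated\<close>:
  Young's inequality, and \<open>|ax + b|\<^sup>s \<le> 2\<^sup>s(|a|\<^sup>s|x|\<^sup>s + |b|\<^sup>s)\<close>.\<close>

lemma ennreal_young_bound:
  fixes x w r r' :: real
  assumes r: "1 < r" and r': "1 < r'" and conj: "1 / r + 1 / r' = 1"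
  shows "ennreal \<bar>x * w\<bar>
    \<le> ennreal (1 / r) * ennreal (\<bar>x\<bar> powr r) + ennreal (1 / r') * ennreal (\<bar>w\<bar> powr r')"
proof -
  have "\<bar>x * w\<bar> \<le> \<bar>x\<bar> powr r / r + \<bar>w\<bar> powr r' / r'"
    unfolding abs_mult by (rule Youngs_inequality[OF r r' conj]) auto
  then have "ennreal \<bar>x * w\<bar> \<le> ennreal (1 / r * \<bar>x\<bar> powr r + 1 / r' * \<bar>w\<bar> powr r')"
    by (intro ennreal_leI) simp
  also have "\<dots> = ennreal (1 / r) * ennreal (\<bar>x\<bar> powr r) + ennreal (1 / r') * ennreal (\<bar>w\<bar> powr r')"
    using r r' by (subst (1 2) ennreal_mult[symmetric]) (auto simp: ennreal_plus)
  finally show ?thesis .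
qed

lemma powr_abs_add_le:
  fixes u v s :: real
  assumes "0 \<le> s"
  shows "\<bar>u + v\<bar> powr s \<le> 2 powr s * (\<bar>u\<bar> powr s + \<bar>v\<bar> powr s)"
proof -
  define m where "m = max \<bar>u\<bar> \<bar>v\<bar>"
  have "\<bar>u + v\<bar> \<le> 2 * m" unfolding m_def by linarith
  then have "\<bar>u + v\<bar> powr s \<le> (2 * m) powr s" using assms by (intro powr_mono2) auto
  also have "\<dots> = 2 powr s * m powr s" using powr_mult[of 2 m s] unfolding m_def by simp
  also have "m powr s \<le> \<bar>u\<bar> powr s + \<bar>v\<bar> powr s" unfolding m_def by (simp add: max_def)
  then have "2 powr s * m powr s \<le> 2 powr s * (\<bar>u\<bar> powr s + \<bar>v\<bar> powr s)" by simp
  finally show ?thesis .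
qed

lemma ennreal_affine_powr_bound:
  fixes a x b s :: real
  assumes s: "0 \<le> s"
  shows "ennreal (\<bar>a * x + b\<bar> powr s)
    \<le> ennreal (2 powr s * \<bar>a\<bar> powr s) * ennreal (\<bar>x\<bar> powr s) + ennreal (2 powr s * \<bar>b\<bar> powr s)"
proof -
  have "\<bar>a * x + b\<bar> powr s \<le> 2 powr s * (\<bar>a * x\<bar> powr s + \<bar>b\<bar> powr s)"
    by (rule powr_abs_add_le[OF s])
  also have "\<dots> = 2 powr s * \<bar>a\<bar> powr s * \<bar>x\<bar> powr s + 2 powr s * \<bar>b\<bar> powr s"
    by (simp add: abs_mult powr_mult algebra_simps)
  finally have "ennreal (\<bar>a * x + b\<bar> powr s)
      \<le> ennreal (2 powr s * \<bar>a\<bar> powr s * \<bar>x\<bar> powr s + 2 powr s * \<bar>b\<bar> powr s)"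
    by (rule ennreal_leI)
  also have "\<dots> = ennreal (2 powr s * \<bar>a\<bar> powr s) * ennreal (\<bar>x\<bar> powr s) + ennreal (2 powr s * \<bar>b\<bar> powr s)"
    by (subst ennreal_mult[symmetric]) (auto simp: ennreal_plus)
  finally show ?thesis .
qed

text \<open>For \<open>1 < p < \<infinity>\<close> this follows from Young's inequality
  \<open>|XW| \<le> |X|\<^sup>p/p + |W|\<^sup>q/q\<close>; the extreme exponents are handled by domination.\<close>

lemma LpG_product_cond_integrable:
  assumes P: "prob_space M" and sub: "subalgebra M G" and p1: "1 \<le> p"
    and X: "X \<in> LpG M G p" and W: "W \<in> LpG M G (conj_exp p)"
  shows "cond_integrable M G (\<lambda>x. X x * W x)"
proof -
  interpret sigma_finite_subalgebra M G using prob_space_sigma_finite_subalgebra[OF P sub] .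
  have Xm[measurable]: "X \<in> borel_measurable M" and Wm[measurable]: "W \<in> borel_measurable M"
    using X W unfolding LpG_def by auto
  from p1 show ?thesis
  proof (cases rule: conj_exp_cases)
    case 1
    with W have "W \<in> LpG M G \<infinity>" by simp
    then obtain g where "g \<in> borel_measurable G" "AE x in M. \<bar>W x\<bar> \<le> g x"
      by (rule LpG_infinity_dominated[OF P sub])
    then have "cond_integrable M G (\<lambda>x. W x * X x)"
      using LpG_one_cond_integrable X 1 by (intro cond_integrable_dominated_mult) auto
    then show ?thesis by (simp add: mult.commute)
  next
    case 2
    with X have "X \<in> LpG M G \<infinity>" by simp
    then obtain g where "g \<in> borel_measurable G" "AE x in M. \<bar>X x\<bar> \<le> g x"
      by (rule LpG_infinity_dominated[OF P sub])
    then show ?thesis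
      using LpG_one_cond_integrable W 2 by (intro cond_integrable_dominated_mult) auto
  next
    case (3 r)
    define r' where "r' = r / (r - 1)"
    have r'1: "1 < r'" unfolding r'_def using 3 by (simp add: field_simps)
    have sum1: "1 / r + 1 / r' = 1" unfolding r'_def using 3 by (simp add: field_simps)
    have fX: "AE x in M. nn_cond_exp M G (\<lambda>x. ennreal (\<bar>X x\<bar> powr r)) x \<noteq> \<infinity>"
      using X 3 by (subst (asm) LpG_finite_iff) auto
    have fW: "AE x in M. nn_cond_exp M G (\<lambda>x. ennreal (\<bar>W x\<bar> powr r')) x \<noteq> \<infinity>"
      using W 3 unfolding r'_def by (subst (asm) LpG_finite_iff) auto
    have "AE x in M. nn_cond_exp M G (\<lambda>x. ennreal \<bar>X x * W x\<bar>) x \<noteq> \<infinity>"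
      by (rule nn_cond_exp_finite_dominated[where gA="\<lambda>x. ennreal (\<bar>X x\<bar> powr r)"
            and gB="\<lambda>x. ennreal (\<bar>W x\<bar> powr r')" and aA="\<lambda>x. 1 / r" and aB="\<lambda>x. 1 / r'" and b="\<lambda>x. 0"])
         (use fX fW in \<open>auto intro!: AE_I2 ennreal_young_bound[OF \<open>1 < r\<close> r'1 sum1]
                              simp: infinity_ennreal_def\<close>)
    then show ?thesis unfolding cond_integrable_def by simp
  qed
qed

lemma LpG_affine:
  assumes P: "prob_space M" and sub: "subalgebra M G"
    and X: "X \<in> LpG M G p" and am[measurable]: "a \<in> borel_measurable G"
    and bm[measurable]: "b \<in> borel_measurable G"
  shows "(\<lambda>x. a x * X x + b x) \<in> LpG M G p"
proof -
  interpret sigma_finite_subalgebra M G using prob_space_sigma_finite_subalgebra[OF P sub] .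
  have Xm[measurable]: "X \<in> borel_measurable M" using X unfolding LpG_def by auto
  have [measurable]: "a \<in> borel_measurable M" "b \<in> borel_measurable M"
    by (rule measurable_from_subalg[OF subalg], simp)+
  have Ym: "(\<lambda>x. a x * X x + b x) \<in> borel_measurable M" by measurable
  show ?thesis
  proof (cases "p = \<infinity>")
    case True
    with X have "X \<in> LpG M G \<infinity>" by simp
    then obtain g where gm[measurable]: "g \<in> borel_measurable G" and gb: "AE x in M. \<bar>X x\<bar> \<le> g x"
      by (rule LpG_infinity_dominated[OF P sub])
    have "AE x in M. \<bar>a x * X x + b x\<bar> \<le> \<bar>a x\<bar> * g x + \<bar>b x\<bar>"
      using gb
    proof eventually_elim
      case (elim x)
      have "\<bar>a x * X x + b x\<bar> \<le> \<bar>a x\<bar> * \<bar>X x\<bar> + \<bar>b x\<bar>"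
        by (metis abs_mult abs_triangle_ineq)
      also have "\<bar>a x\<bar> * \<bar>X x\<bar> \<le> \<bar>a x\<bar> * g x" using elim by (rule mult_left_mono) simp
      finally show ?case by simp
    qed
    then show ?thesis unfolding True
      by (rule LpG_infinityI[OF P sub Ym, rotated]) measurable
  next
    case False
    define s where "s = enn2real p"
    have s0: "0 \<le> s" unfolding s_def by simp
    have fX: "AE x in M. nn_cond_exp M G (\<lambda>x. ennreal (\<bar>X x\<bar> powr s)) x \<noteq> \<infinity>"
      using X False unfolding s_def by (subst (asm) LpG_finite_iff) auto
    have "AE x in M. nn_cond_exp M G (\<lambda>x. ennreal (\<bar>a x * X x + b x\<bar> powr s)) x \<noteq> \<infinity>"
      by (rule nn_cond_exp_finite_dominated[where gA="\<lambda>x. ennreal (\<bar>X x\<bar> powr s)"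
            and gB="\<lambda>x. ennreal (\<bar>X x\<bar> powr s)" and aA="\<lambda>x. 2 powr s * \<bar>a x\<bar> powr s"
            and aB="\<lambda>x. 0" and b="\<lambda>x. 2 powr s * \<bar>b x\<bar> powr s"])
         (use fX in \<open>auto intro!: AE_I2 ennreal_affine_powr_bound[OF s0] simp: infinity_ennreal_def\<close>)
    then show ?thesis using Ym False unfolding s_def by (subst LpG_finite_iff) auto
  qed
qed

subsection \<open>The dual representation\<close>

lemma class_M_values:
  assumes "class_M M G p K" "Y \<in> L0 G" "Z \<in> Pq M G (conj_exp p)"
  shows "K Y Z \<in> borel_measurable G" "AE \<omega> in M. K Y Z \<omega> > -\<infinity>"
proof -
  have "\<forall>Y\<in>L0 G. \<forall>Z\<in>Pq M G (conj_exp p). K Y Z \<in> borel_measurable G \<and> (AE \<omega> in M. K Y Z \<omega> > -\<infinity>)"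
    using assms(1) unfolding class_M_def Let_def by (elim conjE)
  then show "K Y Z \<in> borel_measurable G" "AE \<omega> in M. K Y Z \<omega> > -\<infinity>"
    using assms(2,3) by simp_all
qed

lemma class_M_mono:
  assumes "class_M M G p K" "Y \<in> L0 G" "Y' \<in> L0 G" "Z \<in> Pq M G (conj_exp p)"
    and "AE \<omega> in M. Y \<omega> \<le> Y' \<omega>"
  shows "AE \<omega> in M. K Y Z \<omega> \<le> K Y' Z \<omega>"
proof -
  have "\<forall>Y\<in>L0 G. \<forall>Y'\<in>L0 G. \<forall>Z\<in>Pq M G (conj_exp p).
       (AE \<omega> in M. Y \<omega> \<le> Y' \<omega>) \<longrightarrow> (AE \<omega> in M. K Y Z \<omega> \<le> K Y' Z \<omega>)"
    using assms(1) unfolding class_M_def Let_def by (elim conjE)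
  then show ?thesis using assms(2-5) by simp
qed

lemma class_M_separation:
  assumes "class_M M G p K" "Ys \<in> L0 G" "Zs \<in> Pq M G (conj_exp p)" "A \<in> sets G" "\<alpha> \<in> L0 G"
    and "AE \<omega> in M. \<omega> \<in> A \<longrightarrow> K Ys Zs \<omega> < ereal (\<alpha> \<omega>)"
  obtains S X where "S \<in> L0pp M G" "X \<in> LpG M G p"
    "\<And>Y Z. Y \<in> L0 G \<Longrightarrow> Z \<in> Pq M G (conj_exp p) \<Longrightarrow>
       AE \<omega> in M. \<omega> \<in> A \<longrightarrow> K Y Z \<omega> \<ge> ereal (\<alpha> \<omega>) \<Longrightarrow>
       AE \<omega> in M. \<omega> \<in> A \<longrightarrow>
         Ys \<omega> * S \<omega> + real_cond_exp M G (\<lambda>x. X x * Zs x) \<omega>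
           < Y \<omega> * S \<omega> + real_cond_exp M G (\<lambda>x. X x * Z x) \<omega>"
proof -
  have "\<forall>Ys\<in>L0 G. \<forall>Zs\<in>Pq M G (conj_exp p). \<forall>A\<in>sets G. \<forall>\<alpha>\<in>L0 G.
       (AE \<omega> in M. \<omega> \<in> A \<longrightarrow> K Ys Zs \<omega> < ereal (\<alpha> \<omega>)) \<longrightarrow>
       (\<exists>S\<in>L0pp M G. \<exists>X\<in>LpG M G p.
          \<forall>Y\<in>L0 G. \<forall>Z\<in>Pq M G (conj_exp p).
            (AE \<omega> in M. \<omega> \<in> A \<longrightarrow> K Y Z \<omega> \<ge> ereal (\<alpha> \<omega>)) \<longrightarrow>
            (AE \<omega> in M. \<omega> \<in> A \<longrightarrow>
               Ys \<omega> * S \<omega> + real_cond_exp M G (\<lambda>x. X x * Zs x) \<omega>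
                 < Y \<omega> * S \<omega> + real_cond_exp M G (\<lambda>x. X x * Z x) \<omega>))"
    using assms(1) unfolding class_M_def Let_def by (elim conjE)
  then have "\<exists>S\<in>L0pp M G. \<exists>X\<in>LpG M G p.
          \<forall>Y\<in>L0 G. \<forall>Z\<in>Pq M G (conj_exp p).
            (AE \<omega> in M. \<omega> \<in> A \<longrightarrow> K Y Z \<omega> \<ge> ereal (\<alpha> \<omega>)) \<longrightarrow>
            (AE \<omega> in M. \<omega> \<in> A \<longrightarrow>
               Ys \<omega> * S \<omega> + real_cond_exp M G (\<lambda>x. X x * Zs x) \<omega>
                 < Y \<omega> * S \<omega> + real_cond_exp M G (\<lambda>x. X x * Z x) \<omega>)"
    using assms(2-6) by (elim ballE impE) auto
  then obtain S X where SX: "S \<in> L0pp M G" "X \<in> LpG M G p" and sep: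
      "\<forall>Y\<in>L0 G. \<forall>Z\<in>Pq M G (conj_exp p).
            (AE \<omega> in M. \<omega> \<in> A \<longrightarrow> K Y Z \<omega> \<ge> ereal (\<alpha> \<omega>)) \<longrightarrow>
            (AE \<omega> in M. \<omega> \<in> A \<longrightarrow>
               Ys \<omega> * S \<omega> + real_cond_exp M G (\<lambda>x. X x * Zs x) \<omega>
                 < Y \<omega> * S \<omega> + real_cond_exp M G (\<lambda>x. X x * Z x) \<omega>)"
    by (elim bexE)
  show ?thesis by (rule that[OF SX sep[rule_format]])
qed

lemma cond_exp_affine_density:
  assumes P: "prob_space M" and sub: "subalgebra M G" and p1: "1 \<le> p"
    and X: "X \<in> LpG M G p" and [measurable]: "a \<in> borel_measurable G" "c \<in> borel_measurable G"
    and W: "W \<in> Pq M G (conj_exp p)"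
  shows "AE x in M. real_cond_exp M G (\<lambda>x. - (a x * X x + c x) * W x) x
      = - a x * real_cond_exp M G (\<lambda>x. X x * W x) x - c x"
proof -
  interpret sigma_finite_subalgebra M G using prob_space_sigma_finite_subalgebra[OF P sub] .
  have XW: "cond_integrable M G (\<lambda>x. X x * W x)"
    using W unfolding Pq_def by (intro LpG_product_cond_integrable[OF P sub p1 X]) simp
  have Wc: "cond_integrable M G W" by (rule Pq_cond_integrable[OF P sub W])
  have W1: "AE x in M. real_cond_exp M G W x = 1" using W unfolding Pq_def by simp
  have [measurable]: "X \<in> borel_measurable M" "W \<in> borel_measurable M"
    using XW Wc X unfolding cond_integrable_def LpG_def by simp_all
  have [measurable]: "a \<in> borel_measurable M" "c \<in> borel_measurable M"
    by (rule measurable_from_subalg[OF subalg], simp)+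
  have split: "(\<lambda>x. - (a x * X x + c x) * W x) = (\<lambda>x. (- a x) * (X x * W x) + (- c x) * W x)"
    by (rule ext) (simp add: algebra_simps)
  have ci1: "cond_integrable M G (\<lambda>x. (- a x) * (X x * W x))"
    by (rule cond_integrable_dominated_mult[OF XW, where g="\<lambda>x. \<bar>a x\<bar>"]) auto
  have ci2: "cond_integrable M G (\<lambda>x. (- c x) * W x)"
    by (rule cond_integrable_dominated_mult[OF Wc, where g="\<lambda>x. \<bar>c x\<bar>"]) auto
  have "AE x in M. real_cond_exp M G (\<lambda>x. (- a x) * (X x * W x)) x
      = (- a x) * real_cond_exp M G (\<lambda>x. X x * W x) x"
    by (rule real_cond_exp_mult_F) measurable
  moreover have "AE x in M. real_cond_exp M G (\<lambda>x. (- c x) * W x) x = (- c x) * real_cond_exp M G W x"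
    by (rule real_cond_exp_mult_F) measurable
  ultimately show ?thesis
    unfolding split using real_cond_exp_add_cond_integrable[OF ci1 ci2] W1 by eventually_elim simp
qed

text \<open>If \<open>K(Y*,Q*) < \<alpha>\<close> on \<open>A\<close>, the separating pair \<open>(S,X)\<close>
  rescaled to \<open>\<xi> = X/S + c\<close> is an acceptable position such that \<open>K(E[-\<xi> dQ/dP|G], Q) \<ge> \<alpha>\<close>
  on \<open>A\<close> can only hold when \<open>A\<close> is a null set.\<close>

lemma acceptable_witness:
  assumes P: "prob_space M" and sub: "subalgebra M G" and p1: "1 \<le> p"
    and CM: "class_M M G p K" and Ys: "Ys \<in> L0 G" and Zs: "Zs \<in> Pq M G (conj_exp p)"
    and A: "A \<in> sets G" and \<alpha>: "\<alpha> \<in> L0 G"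
    and below: "AE \<omega> in M. \<omega> \<in> A \<longrightarrow> K Ys Zs \<omega> < ereal (\<alpha> \<omega>)"
  obtains \<xi> where "\<xi> \<in> acc_set M G p Ys Zs"
    "\<And>Z. Z \<in> Pq M G (conj_exp p) \<Longrightarrow>
       AE \<omega> in M. \<omega> \<in> A \<longrightarrow> ereal (\<alpha> \<omega>) \<le> K (real_cond_exp M G (\<lambda>x. - \<xi> x * Z x)) Z \<omega> \<Longrightarrow>
       AE \<omega> in M. \<omega> \<notin> A"
proof -
  obtain S X where S: "S \<in> L0pp M G" and X: "X \<in> LpG M G p"
    and sep: "\<And>Y Z. Y \<in> L0 G \<Longrightarrow> Z \<in> Pq M G (conj_exp p) \<Longrightarrow>
       AE \<omega> in M. \<omega> \<in> A \<longrightarrow> K Y Z \<omega> \<ge> ereal (\<alpha> \<omega>) \<Longrightarrow>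
       AE \<omega> in M. \<omega> \<in> A \<longrightarrow>
         Ys \<omega> * S \<omega> + real_cond_exp M G (\<lambda>x. X x * Zs x) \<omega>
           < Y \<omega> * S \<omega> + real_cond_exp M G (\<lambda>x. X x * Z x) \<omega>"
    using class_M_separation[OF CM Ys Zs A \<alpha> below] by blast
  have [measurable]: "S \<in> borel_measurable G" "Ys \<in> borel_measurable G" and Spos: "AE \<omega> in M. S \<omega> > 0"
    using S Ys unfolding L0pp_def L0_def by auto
  define c where "c = (\<lambda>x. - Ys x - real_cond_exp M G (\<lambda>x. X x * Zs x) x / S x)"
  define \<xi> where "\<xi> = (\<lambda>x. (1 / S x) * X x + c x)"
  have [measurable]: "c \<in> borel_measurable G" unfolding c_def by measurable
  have shift: "AE x in M. real_cond_exp M G (\<lambda>x. - \<xi> x * W x) x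
      = - (1 / S x) * real_cond_exp M G (\<lambda>x. X x * W x) x - c x"
    if "W \<in> Pq M G (conj_exp p)" for W
    unfolding \<xi>_def by (rule cond_exp_affine_density[OF P sub p1 X _ _ that]) measurable
  show ?thesis
  proof (rule that)
    have "\<xi> \<in> LpG M G p" unfolding \<xi>_def by (rule LpG_affine[OF P sub X]) measurable
    moreover have "AE x in M. real_cond_exp M G (\<lambda>x. - \<xi> x * Zs x) x = Ys x"
      using shift[OF Zs] by eventually_elim (simp add: c_def)
    ultimately show "\<xi> \<in> acc_set M G p Ys Zs" unfolding acc_set_def by auto
  next
    fix Z assume Z: "Z \<in> Pq M G (conj_exp p)"
      and above: "AE \<omega> in M. \<omega> \<in> A \<longrightarrow> ereal (\<alpha> \<omega>) \<le> K (real_cond_exp M G (\<lambda>x. - \<xi> x * Z x)) Z \<omega>"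
    define Y where "Y = real_cond_exp M G (\<lambda>x. - \<xi> x * Z x)"
    have "Y \<in> L0 G" unfolding Y_def L0_def by simp
    from sep[OF this Z above[folded Y_def]] shift[OF Z] Spos
    show "AE \<omega> in M. \<omega> \<notin> A"
    proof eventually_elim
      case (elim \<omega>)
      \<comment> \<open>by the choice of \<open>c\<close> the strict inequality is an identity\<close>
      have "Y \<omega> * S \<omega> + real_cond_exp M G (\<lambda>x. X x * Z x) \<omega>
            = Ys \<omega> * S \<omega> + real_cond_exp M G (\<lambda>x. X x * Zs x) \<omega>"
        using elim(2,3) unfolding Y_def c_def by (simp add: field_simps)
      then show ?case using elim(1) by auto
    qed
  qed
qed

lemma ereal_measurable_separator:
  fixes \<kappa> \<eta> :: "'a \<Rightarrow> ereal"
  assumes [measurable]: "\<kappa> \<in> borel_measurable G" "\<eta> \<in> borel_measurable G"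
  obtains \<alpha> :: "'a \<Rightarrow> real" where "\<alpha> \<in> borel_measurable G"
    "\<And>\<omega>. -\<infinity> < \<kappa> \<omega> \<Longrightarrow> \<kappa> \<omega> < \<eta> \<omega> \<Longrightarrow> \<kappa> \<omega> < ereal (\<alpha> \<omega>) \<and> ereal (\<alpha> \<omega>) \<le> \<eta> \<omega>"
proof
  define \<alpha> where "\<alpha> = (\<lambda>\<omega>. if \<eta> \<omega> = \<infinity> then real_of_ereal (\<kappa> \<omega>) + 1
                       else (real_of_ereal (\<kappa> \<omega>) + real_of_ereal (\<eta> \<omega>)) / 2)"
  show "\<alpha> \<in> borel_measurable G" unfolding \<alpha>_def by measurable
  fix \<omega> assume h: "-\<infinity> < \<kappa> \<omega>" "\<kappa> \<omega> < \<eta> \<omega>"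
  then obtain k where k: "\<kappa> \<omega> = ereal k" by (cases "\<kappa> \<omega>") auto
  show "\<kappa> \<omega> < ereal (\<alpha> \<omega>) \<and> ereal (\<alpha> \<omega>) \<le> \<eta> \<omega>"
  proof (cases "\<eta> \<omega> = \<infinity>")
    case True
    then show ?thesis unfolding \<alpha>_def using k by simp
  next
    case False
    then obtain e where e: "\<eta> \<omega> = ereal e" using h k by (cases "\<eta> \<omega>") auto
    then show ?thesis unfolding \<alpha>_def using h k by simp
  qed
qed

text \<open>Lower bound: by monotonicity, \<open>K(Y*,Q*)\<close> is below every value over \<open>A(Y*,Q*)\<close> at \<open>Q*\<close>.\<close>

lemma le_ess_inf_acc_set:
  assumes P: "prob_space M" and sub: "subalgebra M G"
    and CM: "class_M M G p K" and Ys: "Ys \<in> L0 G" and Zs: "Zs \<in> Pq M G (conj_exp p)"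
  shows "AE \<omega> in M. K Ys Zs \<omega>
    \<le> ess_inf M G (acc_set M G p Ys Zs) (\<lambda>X. K (real_cond_exp M G (\<lambda>x. - X x * Zs x)) Zs) \<omega>"
proof -
  have ceL0: "real_cond_exp M G h \<in> L0 G" for h unfolding L0_def by simp
  have "is_ess_inf M G (acc_set M G p Ys Zs) (\<lambda>X. K (real_cond_exp M G (\<lambda>x. - X x * Zs x)) Zs)
      (ess_inf M G (acc_set M G p Ys Zs) (\<lambda>X. K (real_cond_exp M G (\<lambda>x. - X x * Zs x)) Zs))"
    by (rule is_ess_inf_ess_inf[OF P sub class_M_values(1)[OF CM ceL0 Zs]])
  moreover have "K Ys Zs \<in> borel_measurable G" by (rule class_M_values(1)[OF CM Ys Zs])
  moreover have "AE \<omega> in M. K Ys Zs \<omega> \<le> K (real_cond_exp M G (\<lambda>x. - X x * Zs x)) Zs \<omega>"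
    if "X \<in> acc_set M G p Ys Zs" for X
    using that unfolding acc_set_def by (intro class_M_mono[OF CM Ys ceL0 Zs]) auto
  ultimately show ?thesis unfolding is_ess_inf_def by blast
qed

text \<open>Upper bound: for every density \<open>Q\<close>, the infimum over \<open>A(Y*,Q*)\<close> at \<open>Q\<close> does
  not exceed \<open>K(Y*,Q*)\<close>; otherwise \<open>acceptable_witness\<close> contradicts the strict gap.\<close>

lemma ess_inf_acc_set_le:
  assumes P: "prob_space M" and sub: "subalgebra M G" and p1: "1 \<le> p"
    and CM: "class_M M G p K" and Ys: "Ys \<in> L0 G" and Zs: "Zs \<in> Pq M G (conj_exp p)"
    and Z: "Z \<in> Pq M G (conj_exp p)"
  shows "AE \<omega> in M.
    ess_inf M G (acc_set M G p Ys Zs) (\<lambda>X. K (real_cond_exp M G (\<lambda>x. - X x * Z x)) Z) \<omega> \<le> K Ys Zs \<omega>"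
proof -
  define \<kappa> where "\<kappa> = K Ys Zs"
  define \<eta> where "\<eta> = ess_inf M G (acc_set M G p Ys Zs) (\<lambda>X. K (real_cond_exp M G (\<lambda>x. - X x * Z x)) Z)"
  have ceL0: "real_cond_exp M G h \<in> L0 G" for h unfolding L0_def by simp
  have \<eta>: "is_ess_inf M G (acc_set M G p Ys Zs) (\<lambda>X. K (real_cond_exp M G (\<lambda>x. - X x * Z x)) Z) \<eta>"
    unfolding \<eta>_def by (rule is_ess_inf_ess_inf[OF P sub class_M_values(1)[OF CM ceL0 Z]])
  have [measurable]: "\<kappa> \<in> borel_measurable G" "\<eta> \<in> borel_measurable G"
    using class_M_values(1)[OF CM Ys Zs] \<eta> unfolding \<kappa>_def is_ess_inf_def by auto
  obtain \<alpha> where \<alpha>[measurable]: "\<alpha> \<in> borel_measurable G"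
    and between: "\<And>\<omega>. -\<infinity> < \<kappa> \<omega> \<Longrightarrow> \<kappa> \<omega> < \<eta> \<omega> \<Longrightarrow> \<kappa> \<omega> < ereal (\<alpha> \<omega>) \<and> ereal (\<alpha> \<omega>) \<le> \<eta> \<omega>"
    by (rule ereal_measurable_separator[of \<kappa> G \<eta>]) measurable
  define A where "A = {\<omega> \<in> space G. -\<infinity> < \<kappa> \<omega> \<and> \<kappa> \<omega> < \<eta> \<omega>}"
  have A: "A \<in> sets G" unfolding A_def by measurable
  have spG: "space G = space M" using sub unfolding subalgebra_def by simp
  have \<alpha>L0: "\<alpha> \<in> L0 G" unfolding L0_def by simp
  have below: "AE \<omega> in M. \<omega> \<in> A \<longrightarrow> K Ys Zs \<omega> < ereal (\<alpha> \<omega>)"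
    using between unfolding A_def \<kappa>_def by auto
  obtain \<xi> where \<xi>: "\<xi> \<in> acc_set M G p Ys Zs"
    and null: "\<And>Z. Z \<in> Pq M G (conj_exp p) \<Longrightarrow>
       AE \<omega> in M. \<omega> \<in> A \<longrightarrow> ereal (\<alpha> \<omega>) \<le> K (real_cond_exp M G (\<lambda>x. - \<xi> x * Z x)) Z \<omega> \<Longrightarrow>
       AE \<omega> in M. \<omega> \<notin> A"
    using acceptable_witness[OF P sub p1 CM Ys Zs A \<alpha>L0 below] by blast
  have "\<forall>X\<in>acc_set M G p Ys Zs. AE \<omega> in M. \<eta> \<omega> \<le> K (real_cond_exp M G (\<lambda>x. - X x * Z x)) Z \<omega>"
    using \<eta> unfolding is_ess_inf_def by (elim conjE)
  then have "AE \<omega> in M. \<eta> \<omega> \<le> K (real_cond_exp M G (\<lambda>x. - \<xi> x * Z x)) Z \<omega>"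
    using \<xi> by simp
  then have "AE \<omega> in M. \<omega> \<in> A \<longrightarrow> ereal (\<alpha> \<omega>) \<le> K (real_cond_exp M G (\<lambda>x. - \<xi> x * Z x)) Z \<omega>"
    by eventually_elim (use between in \<open>force simp: A_def\<close>)
  then have "AE \<omega> in M. \<omega> \<notin> A" by (rule null[OF Z])
  then show ?thesis
    using class_M_values(2)[OF CM Ys Zs] AE_space unfolding \<eta>_def[symmetric] \<kappa>_def[symmetric]
    by eventually_elim (auto simp: A_def spG not_le)
qed

theorem mainTheorem6:
  fixes M G :: "'a measure" and p :: ennreal
    and K :: "('a \<Rightarrow> real) \<Rightarrow> ('a \<Rightarrow> real) \<Rightarrow> 'a \<Rightarrow> ereal"
  assumes "prob_space M" and "subalgebra M G" and "1 \<le> p"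
    and "class_M M G p K"
    and "Ys \<in> L0 G" and "Zs \<in> Pq M G (conj_exp p)"
  shows "AE \<omega> in M. K Ys Zs \<omega> =
           ess_sup M G (Pq M G (conj_exp p))
             (\<lambda>Z. ess_inf M G (acc_set M G p Ys Zs)
                    (\<lambda>X. K (real_cond_exp M G (\<lambda>x. - X x * Z x)) Z)) \<omega>"
proof (rule is_ess_sup_AE_eq)
  let ?F = "\<lambda>Z. ess_inf M G (acc_set M G p Ys Zs) (\<lambda>X. K (real_cond_exp M G (\<lambda>x. - X x * Z x)) Z)"
  show "is_ess_sup M G (Pq M G (conj_exp p)) ?F (K Ys Zs)"
    unfolding is_ess_sup_def
  proof (intro conjI ballI allI impI)
    show "K Ys Zs \<in> borel_measurable G" by (rule class_M_values(1)[OF assms(4-6)])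
    show "AE \<omega> in M. ?F Z \<omega> \<le> K Ys Zs \<omega>" if "Z \<in> Pq M G (conj_exp p)" for Z
      by (rule ess_inf_acc_set_le[OF assms that])
    fix h assume "\<forall>Z\<in>Pq M G (conj_exp p). AE \<omega> in M. ?F Z \<omega> \<le> h \<omega>"
    then have "AE \<omega> in M. ?F Zs \<omega> \<le> h \<omega>" using assms(6) by blast
    with le_ess_inf_acc_set[OF assms(1,2,4-6)] show "AE \<omega> in M. K Ys Zs \<omega> \<le> h \<omega>"
      by eventually_elim (rule order_trans)
  qed
qed

end
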